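(* Let $B\colon\mathbb R^{2m}\to\mathbb R^{2m}$ be a linear map with no real eigenvalues, and consider the nondegenerate line fibration of $\mathbb R^{2m+1}$ it generates. This fibration corresponds to a (continuous) great circle fibration of $S^{2m+1}$ if and only if $B$ is invariant on planes.
   Context: Write $\mathbb R^{2m+1}=\mathbb R^{2m}\times\mathbb R$; $B$ generates the family of oriented lines $\{(y+tB(y),\,t):t\in\mathbb R\}$, $y\in\mathbb R^{2m}$, which is a smooth nondegenerate line fibration of $\mathbb R^{2m+1}$ since $B$ has no real eigenvalues. Identify $\mathbb R^{2m+1}$ with the hyperplane $\{x_{2m+2}=1\}\subset\mathbb R^{2m+2}$ tangent to $S^{2m+1}$ at the north pole; each line $\ell$ of the fibration determines the great circle $S^{2m+1}\cap\alpha(\ell)$, where $\alpha(\ell)$ is the linear span of $\ell\times\{1\}$. The fibration corresponds to a great circle fibration if there exists a continuous fibration of $S^{2m+1}$ by oriented great circles whose fibers meeting the open upper hemisphere $\{x_{2m+2}>0\}$ are exactly these great circles. A linear map $B$ with no real eigenvalues is invariant on planes if $B^2(u)\in\mathrm{Span}\{u,B(u)\}$ for every nonzero $u\in\mathbb R^{2m}$. *)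

theory Defs
  imports "HOL-Analysis.Analysis"
begin

text \<open>R^{2m} is modelled by a Euclidean space 'a with even dimension;
  R^{2m+1} = 'a \<times> real (last coordinate t), and
  R^{2m+2} = 'a \<times> real \<times> real, the last component being x_{2m+2}.\<close>

definition no_real_eigenvalue :: "('a::real_vector \<Rightarrow> 'a) \<Rightarrow> bool" where
  "no_real_eigenvalue B \<longleftrightarrow> (\<forall>(c::real) u. u \<noteq> 0 \<longrightarrow> B u \<noteq> c *\<^sub>R u)"

definition invariant_on_planes :: "('a::real_vector \<Rightarrow> 'a) \<Rightarrow> bool" where
  "invariant_on_planes B \<longleftrightarrow> (\<forall>u. u \<noteq> 0 \<longrightarrow> B (B u) \<in> span {u, B u})"

text \<open>An oriented great circle through orthonormal a, b (positively oriented
  from a towards b) is represented by its lift to the unit tangent bundle: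
  the set of pairs (point, unit tangent vector in the direction of the orientation).\<close>

definition ogc :: "'v::real_vector \<Rightarrow> 'v \<Rightarrow> ('v \<times> 'v) set" where
  "ogc a b = (\<lambda>\<theta>::real. (cos \<theta> *\<^sub>R a + sin \<theta> *\<^sub>R b, (- sin \<theta>) *\<^sub>R a + cos \<theta> *\<^sub>R b)) ` UNIV"

definition oriented_great_circle :: "('v::real_inner \<times> 'v) set \<Rightarrow> bool" where
  "oriented_great_circle C \<longleftrightarrow>
     (\<exists>a b. norm a = 1 \<and> norm b = 1 \<and> inner a b = 0 \<and> C = ogc a b)"

definition ogc_of_plane :: "'v::real_inner \<Rightarrow> 'v \<Rightarrow> ('v \<times> 'v) set" where
  "ogc_of_plane u w = ogc (sgn u) (sgn (w - (inner w u / inner u u) *\<^sub>R u))"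

text \<open>Continuous fibration of the unit sphere by oriented great circles:
  every point of the sphere lies on exactly one fiber, and the fibers depend
  continuously on the point (the unit tangent field of the fibers is continuous).\<close>

definition great_circle_fibration :: "('v::real_inner \<times> 'v) set set \<Rightarrow> bool" where
  "great_circle_fibration F \<longleftrightarrow>
     (\<forall>C\<in>F. oriented_great_circle C) \<and>
     (\<forall>p\<in>sphere (0::'v) 1. \<exists>!C. C \<in> F \<and> p \<in> fst ` C) \<and>
     (\<exists>v. continuous_on (sphere (0::'v) 1) v \<and> (\<forall>C\<in>F. \<forall>(p, w)\<in>C. v p = w))"

text \<open>The oriented line {(y + t B y, t) : t} of the fibration generated by B, placed in
  the hyperplane x_{2m+2} = 1 as t \<mapsto> (y,0,1) + t (B y,1,0), gives the oriented
  great circle S \<inter> span{(y,0,1),(B y,1,0)}, oriented by increasing t.\<close>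

definition line_great_circle ::
  "('a::euclidean_space \<Rightarrow> 'a) \<Rightarrow> 'a \<Rightarrow> (('a \<times> real \<times> real) \<times> ('a \<times> real \<times> real)) set" where
  "line_great_circle B y = ogc_of_plane (y, 0, 1) (B y, 1, 0)"

definition corresponds_to_great_circle_fibration :: "('a::euclidean_space \<Rightarrow> 'a) \<Rightarrow> bool" where
  "corresponds_to_great_circle_fibration B \<longleftrightarrow>
     (\<exists>F. great_circle_fibration F \<and>
          {C \<in> F. \<exists>pw\<in>C. snd (snd (fst pw)) > 0} = range (line_great_circle B))"

end

(*
  If B is invariant on planes and has no real eigenvalues, then B\<^sup>2 = x + y B holds globally with
  y\<^sup>2 + 4 x < 0, so B = a + b J with J\<^sup>2 = -1 and b > 0.  Let M be the complex structure of
  R\<^sup>2 with M (0, 1) = (1, -a) / b and K = J \<times> M on R\<^bsup>2m+2\<^esup> = R\<^bsup>2m\<^esup> \<times> R\<^sup>2.  Then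
  b K (y, 0, 1) = (B y, 1, 0) - a (y, 0, 1), so the great circle of every line is a complex line of K,
  and the lines are exactly the fibres of the Hopf fibration of K that meet the upper hemisphere.

  Conversely, let T be the continuous unit tangent field of a great circle fibration extending the
  lines.  The line through (v / h, 0, 1) with direction (B v / h, 1, 0) contains the direction of
  (v + t B v, t h, h), with tangent along (B v, h, 0).  Letting h \<rightarrow> 0+, the tangent T at the
  equator point (u, 0, 0), u = v + t B v, is the unit vector of span {u, B v} orthogonal to u on the
  side of B v.  Comparing t = 0, v = u with t = 1, v = (I + B)\<^sup>-\<^sup>1 u gives
  B v = \<rho> B u + \<mu> u with \<rho> \<noteq> 0, and applying B to v + B v = u yields B\<^sup>2 u \<in> span {u, B u}.
*)

theory Submission
  imports Defs
begin

section \<open>Oriented great circles in a plane\<close>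

definition gram_schmidt_dir :: "'v::real_inner \<Rightarrow> 'v \<Rightarrow> 'v" where
  "gram_schmidt_dir u w = sgn (w - (inner w u / inner u u) *\<^sub>R u)"

lemma ogc_of_plane_eq: "ogc_of_plane u w = ogc (sgn u) (gram_schmidt_dir u w)"
  unfolding ogc_of_plane_def gram_schmidt_dir_def ..

lemma inner_orthonormal_comb:
  fixes a b :: "'v::real_inner"
  assumes "norm a = 1" "norm b = 1" "inner a b = 0"
  shows "inner (x *\<^sub>R a + y *\<^sub>R b) (x' *\<^sub>R a + y' *\<^sub>R b) = x * x' + y * y'"
proof -
  have "inner a a = 1" "inner b b = 1" "inner b a = 0"
    using assms by (simp_all add: dot_square_norm inner_commute)
  then show ?thesis
    using assms(3) by (simp add: inner_add_left inner_add_right)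
qed

lemma norm_orthonormal_comb:
  fixes a b :: "'v::real_inner"
  assumes "norm a = 1" "norm b = 1" "inner a b = 0"
  shows "norm (x *\<^sub>R a + y *\<^sub>R b) = sqrt (x\<^sup>2 + y\<^sup>2)"
  using inner_orthonormal_comb[OF assms, of x y x y] by (simp add: norm_eq_sqrt_inner power2_eq_square)

lemma ogc_base: "(a, b) \<in> ogc a b"
  unfolding ogc_def by (rule image_eqI[of _ _ 0]) auto

lemma ogc_norm:
  fixes a b :: "'v::real_inner"
  assumes "norm a = 1" "norm b = 1" "inner a b = 0" and "q \<in> fst ` ogc a b"
  shows "norm q = 1"
  using assms norm_orthonormal_comb[OF assms(1-3)] unfolding ogc_def by auto

lemma ogc_tangent_unique:
  fixes a b :: "'v::real_inner"
  assumes on: "norm a = 1" "norm b = 1" "inner a b = 0"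
    and "(q, w) \<in> ogc a b" "(q, w') \<in> ogc a b"
  shows "w = w'"
proof -
  obtain t where q: "q = cos t *\<^sub>R a + sin t *\<^sub>R b" and w: "w = (- sin t) *\<^sub>R a + cos t *\<^sub>R b"
    using assms(4) unfolding ogc_def by auto
  obtain t' where q': "q = cos t' *\<^sub>R a + sin t' *\<^sub>R b" and w': "w' = (- sin t') *\<^sub>R a + cos t' *\<^sub>R b"
    using assms(5) unfolding ogc_def by auto
  have "inner a a = 1" "inner b b = 1" "inner b a = 0"
    using on by (simp_all add: dot_square_norm inner_commute)
  then have coords: "inner (cos s *\<^sub>R a + sin s *\<^sub>R b) a = cos s"
    "inner (cos s *\<^sub>R a + sin s *\<^sub>R b) b = sin s" for s
    using on(3) by (simp_all add: inner_add_left)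
  have "cos t = cos t'" "sin t = sin t'"
    using coords[of t] coords[of t'] q q' by metis+
  then show ?thesis
    using w w' by simp
qed

lemma ogc_rotate:
  assumes "(q, w) \<in> ogc a b"
  shows "ogc q w = ogc a b"
proof -
  obtain t where t: "q = cos t *\<^sub>R a + sin t *\<^sub>R b" "w = (- sin t) *\<^sub>R a + cos t *\<^sub>R b"
    using assms unfolding ogc_def by auto
  define f where "f \<theta> = (cos \<theta> *\<^sub>R a + sin \<theta> *\<^sub>R b, (- sin \<theta>) *\<^sub>R a + cos \<theta> *\<^sub>R b)" for \<theta>
  have "(cos \<phi> *\<^sub>R q + sin \<phi> *\<^sub>R w, (- sin \<phi>) *\<^sub>R q + cos \<phi> *\<^sub>R w) = f (\<phi> + t)" for \<phi>
    unfolding f_def t by (simp add: cos_add sin_add algebra_simps)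
  then have "ogc q w = range (\<lambda>\<phi>. f (\<phi> + t))"
    unfolding ogc_def by simp
  also have "\<dots> = range f"
    by (metis surj_plus_right image_image)
  finally show ?thesis
    unfolding ogc_def f_def .
qed

lemma gram_schmidt_dir_orthonormal_pair:
  fixes a e :: "'v::real_inner"
  assumes "norm a = 1" "norm e = 1" "inner a e = 0" "r > 0" "q > 0"
  shows "gram_schmidt_dir (r *\<^sub>R a) (p *\<^sub>R a + q *\<^sub>R e) = e"
proof -
  have "inner (p *\<^sub>R a + q *\<^sub>R e) (r *\<^sub>R a) / inner (r *\<^sub>R a) (r *\<^sub>R a) = p / r"
    using inner_orthonormal_comb[OF assms(1-3), of p q r 0] inner_orthonormal_comb[OF assms(1-3), of r 0 r 0]
      \<open>r > 0\<close> by (simp add: power2_eq_square)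
  then show ?thesis
    using assms by (simp add: gram_schmidt_dir_def sgn_scaleR sgn_div_norm)
qed

lemma scaleR_rotated_frame:
  fixes a b :: "'v::real_vector"
  shows "\<gamma> *\<^sub>R a + \<delta> *\<^sub>R b = (\<gamma> * cos t + \<delta> * sin t) *\<^sub>R (cos t *\<^sub>R a + sin t *\<^sub>R b)
      + (\<delta> * cos t - \<gamma> * sin t) *\<^sub>R ((- sin t) *\<^sub>R a + cos t *\<^sub>R b)"
    (is "_ = ?p *\<^sub>R _ + ?q *\<^sub>R _")
proof -
  have "(cos t)\<^sup>2 + (sin t)\<^sup>2 = 1"
    by simp
  then have "\<gamma> = ?p * cos t - ?q * sin t" "\<delta> = ?p * sin t + ?q * cos t"
    by algebra+
  moreover have "?p *\<^sub>R (cos t *\<^sub>R a + sin t *\<^sub>R b) + ?q *\<^sub>R ((- sin t) *\<^sub>R a + cos t *\<^sub>R b)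
      = (?p * cos t - ?q * sin t) *\<^sub>R a + (?p * sin t + ?q * cos t) *\<^sub>R b"
    by (simp add: algebra_simps)
  ultimately show ?thesis
    by simp
qed

lemma ogc_gram_schmidt_mem:
  fixes a b :: "'v::real_inner"
  assumes on: "norm a = 1" "norm b = 1" "inner a b = 0"
    and det: "\<alpha> * \<delta> - \<beta> * \<gamma> > 0"
  shows "(sgn (\<alpha> *\<^sub>R a + \<beta> *\<^sub>R b), gram_schmidt_dir (\<alpha> *\<^sub>R a + \<beta> *\<^sub>R b) (\<gamma> *\<^sub>R a + \<delta> *\<^sub>R b)) \<in> ogc a b"
proof -
  define r where "r = sqrt (\<alpha>\<^sup>2 + \<beta>\<^sup>2)"
  have "\<alpha> \<noteq> 0 \<or> \<beta> \<noteq> 0"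
    using det by auto
  then have r: "r > 0" "r\<^sup>2 = \<alpha>\<^sup>2 + \<beta>\<^sup>2"
    unfolding r_def by (simp_all add: sum_power2_gt_zero_iff)
  then have "(\<alpha> / r)\<^sup>2 + (\<beta> / r)\<^sup>2 = 1"
    by (simp add: power_divide add_divide_distrib[symmetric] flip: r(2))
  then obtain t where t: "\<alpha> / r = cos t" "\<beta> / r = sin t"
    by (metis sincos_total_2pi)
  define a' where "a' = cos t *\<^sub>R a + sin t *\<^sub>R b"
  define e where "e = (- sin t) *\<^sub>R a + cos t *\<^sub>R b"
  have on': "norm a' = 1" "norm e = 1" "inner a' e = 0"
    using norm_orthonormal_comb[OF on, of "cos t" "sin t"] norm_orthonormal_comb[OF on, of "- sin t" "cos t"]
      inner_orthonormal_comb[OF on, of "cos t" "sin t" "- sin t" "cos t"]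
    by (simp_all add: a'_def e_def)
  have X: "\<alpha> *\<^sub>R a + \<beta> *\<^sub>R b = r *\<^sub>R a'"
    using t r(1) by (simp add: a'_def field_simps)
  have Q: "\<gamma> *\<^sub>R a + \<delta> *\<^sub>R b
      = (\<gamma> * cos t + \<delta> * sin t) *\<^sub>R a' + (\<delta> * cos t - \<gamma> * sin t) *\<^sub>R e"
    unfolding a'_def e_def by (rule scaleR_rotated_frame)
  have "\<delta> * cos t - \<gamma> * sin t = (\<alpha> * \<delta> - \<beta> * \<gamma>) / r"
    using r(1) by (simp add: t[symmetric] field_simps)
  then have "\<delta> * cos t - \<gamma> * sin t > 0"
    using det r(1) by simp
  then have "gram_schmidt_dir (\<alpha> *\<^sub>R a + \<beta> *\<^sub>R b) (\<gamma> *\<^sub>R a + \<delta> *\<^sub>R b) = e"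
    unfolding X Q using gram_schmidt_dir_orthonormal_pair[OF on' r(1)] by blast
  moreover have "sgn (\<alpha> *\<^sub>R a + \<beta> *\<^sub>R b) = a'"
    unfolding X using r(1) on'(1) by (simp add: sgn_scaleR sgn_div_norm)
  ultimately show ?thesis
    unfolding ogc_def a'_def e_def by auto
qed

lemma ogc_of_plane_frame:
  fixes u w :: "'v::real_inner"
  assumes u: "u \<noteq> 0" and w: "\<And>c. w \<noteq> c *\<^sub>R u"
  shows "norm (sgn u) = 1" "norm (gram_schmidt_dir u w) = 1" "inner (sgn u) (gram_schmidt_dir u w) = 0"
    and "u = norm u *\<^sub>R sgn u"
    and "\<exists>\<kappa> n. n > 0 \<and> w = \<kappa> *\<^sub>R sgn u + n *\<^sub>R gram_schmidt_dir u w"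
proof -
  define W where "W = w - (inner w u / inner u u) *\<^sub>R u"
  have W: "W \<noteq> 0"
    unfolding W_def using w by (metis eq_iff_diff_eq_0)
  have "inner u W = 0"
    using u by (simp add: W_def inner_diff_right inner_commute)
  then show "norm (sgn u) = 1" "norm (gram_schmidt_dir u w) = 1" "inner (sgn u) (gram_schmidt_dir u w) = 0"
    using u W by (simp_all add: gram_schmidt_dir_def W_def[symmetric] norm_sgn sgn_div_norm)
  show "u = norm u *\<^sub>R sgn u"
    using u by (simp add: sgn_div_norm)
  have "w = (inner w u / inner u u * norm u) *\<^sub>R sgn u + norm W *\<^sub>R gram_schmidt_dir u w"
    using u W by (simp add: gram_schmidt_dir_def W_def[symmetric] sgn_div_norm) (simp add: W_def)
  then show "\<exists>\<kappa> n. n > 0 \<and> w = \<kappa> *\<^sub>R sgn u + n *\<^sub>R gram_schmidt_dir u w"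
    using W by (intro exI[of _ "inner w u / inner u u * norm u"] exI[of _ "norm W"]) auto
qed

lemma oriented_great_circle_ogc_of_plane:
  fixes u w :: "'v::real_inner"
  assumes "u \<noteq> 0" "\<And>c. w \<noteq> c *\<^sub>R u"
  shows "oriented_great_circle (ogc_of_plane u w)"
  using ogc_of_plane_frame(1-3)[OF assms] unfolding oriented_great_circle_def ogc_of_plane_eq by blast

lemma ogc_of_plane_change_basis:
  fixes u w :: "'v::real_inner"
  assumes u: "u \<noteq> 0" and w: "\<And>c. w \<noteq> c *\<^sub>R u" and det: "\<alpha> * \<delta> - \<beta> * \<gamma> > 0"
  shows "ogc_of_plane (\<alpha> *\<^sub>R u + \<beta> *\<^sub>R w) (\<gamma> *\<^sub>R u + \<delta> *\<^sub>R w) = ogc_of_plane u w"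
proof -
  define a b where "a = sgn u" and "b = gram_schmidt_dir u w"
  note on = ogc_of_plane_frame(1-3)[OF u w, folded a_def b_def]
  obtain \<kappa> n where n: "n > 0" and wab: "w = \<kappa> *\<^sub>R a + n *\<^sub>R b"
    using ogc_of_plane_frame(5)[OF u w] unfolding a_def b_def by blast
  have uab: "u = norm u *\<^sub>R a"
    using ogc_of_plane_frame(4)[OF u w] unfolding a_def .
  have "\<alpha> *\<^sub>R u + \<beta> *\<^sub>R w = (\<alpha> * norm u + \<beta> * \<kappa>) *\<^sub>R a + (\<beta> * n) *\<^sub>R b"
    "\<gamma> *\<^sub>R u + \<delta> *\<^sub>R w = (\<gamma> * norm u + \<delta> * \<kappa>) *\<^sub>R a + (\<delta> * n) *\<^sub>R b"
    by (subst uab, subst wab, simp add: algebra_simps)+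
  moreover have "(\<alpha> * norm u + \<beta> * \<kappa>) * (\<delta> * n) - (\<beta> * n) * (\<gamma> * norm u + \<delta> * \<kappa>)
      = norm u * n * (\<alpha> * \<delta> - \<beta> * \<gamma>)"
    by (simp add: algebra_simps)
  then have "(\<alpha> * norm u + \<beta> * \<kappa>) * (\<delta> * n) - (\<beta> * n) * (\<gamma> * norm u + \<delta> * \<kappa>) > 0"
    using u n det by simp
  ultimately have "(sgn (\<alpha> *\<^sub>R u + \<beta> *\<^sub>R w), gram_schmidt_dir (\<alpha> *\<^sub>R u + \<beta> *\<^sub>R w) (\<gamma> *\<^sub>R u + \<delta> *\<^sub>R w))
      \<in> ogc a b"
    using ogc_gram_schmidt_mem[OF on] by simp
  then show ?thesis
    unfolding ogc_of_plane_eq a_def b_def by (rule ogc_rotate)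
qed

lemma ogc_of_plane_point_in_span:
  assumes "q \<in> fst ` ogc_of_plane u w"
  shows "\<exists>\<alpha> \<beta>. q = \<alpha> *\<^sub>R u + \<beta> *\<^sub>R w"
proof -
  define \<kappa> n where "\<kappa> = inner w u / inner u u" and "n = norm (w - \<kappa> *\<^sub>R u)"
  obtain t where "q = cos t *\<^sub>R sgn u + sin t *\<^sub>R gram_schmidt_dir u w"
    using assms unfolding ogc_of_plane_eq ogc_def by auto
  then have "q = (cos t / norm u - sin t / n * \<kappa>) *\<^sub>R u + (sin t / n) *\<^sub>R w"
    by (simp add: gram_schmidt_dir_def sgn_div_norm \<kappa>_def n_def algebra_simps divide_inverse)
  then show ?thesis
    by blast
qed

lemma tendsto_gram_schmidt_dir:
  fixes X Q :: "'b \<Rightarrow> 'v::real_inner"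
  assumes "(X \<longlongrightarrow> x) F" "(Q \<longlongrightarrow> q) F" "x \<noteq> 0" "\<And>c. q \<noteq> c *\<^sub>R x"
  shows "((\<lambda>h. gram_schmidt_dir (X h) (Q h)) \<longlongrightarrow> gram_schmidt_dir x q) F"
  unfolding gram_schmidt_dir_def
  by (intro tendsto_intros assms) (use assms(3,4) in \<open>auto simp: eq_iff_diff_eq_0[symmetric]\<close>)

lemma gram_schmidt_dir_eq_imp_combination:
  fixes u w w' :: "'v::real_inner"
  assumes eq: "gram_schmidt_dir u w' = gram_schmidt_dir u w" and w: "\<And>c. w \<noteq> c *\<^sub>R u"
  shows "\<exists>\<rho> \<mu>. \<rho> \<noteq> 0 \<and> w' = \<rho> *\<^sub>R w + \<mu> *\<^sub>R u"
proof -
  define \<kappa> \<kappa>' where "\<kappa> = inner w u / inner u u" and "\<kappa>' = inner w' u / inner u u"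
  define W W' where "W = w - \<kappa> *\<^sub>R u" and "W' = w' - \<kappa>' *\<^sub>R u"
  have W: "W \<noteq> 0"
    unfolding W_def using w by (metis eq_iff_diff_eq_0)
  have sgn: "sgn W' = sgn W"
    using eq unfolding gram_schmidt_dir_def W_def W'_def \<kappa>_def \<kappa>'_def .
  then have W': "W' \<noteq> 0"
    using W by (metis sgn_zero_iff)
  have "W' = norm W' *\<^sub>R sgn W'"
    using W' by (simp add: sgn_div_norm)
  also have "\<dots> = (norm W' / norm W) *\<^sub>R W"
    unfolding sgn by (simp add: sgn_div_norm divide_inverse_commute)
  finally have "w' = (norm W' / norm W) *\<^sub>R w + (\<kappa>' - norm W' / norm W * \<kappa>) *\<^sub>R u"
    unfolding W_def W'_def by (simp add: algebra_simps eq_diff_eq)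
  moreover have "norm W' / norm W \<noteq> 0"
    using W W' by simp
  ultimately show ?thesis
    by blast
qed

section \<open>Linear maps without real eigenvalues\<close>

lemma span_pair_iff: "x \<in> span {u, w} \<longleftrightarrow> (\<exists>a b. x = a *\<^sub>R u + b *\<^sub>R w)"
proof -
  have "x - a *\<^sub>R u = b *\<^sub>R w \<longleftrightarrow> x = a *\<^sub>R u + b *\<^sub>R w" for a b
    by (auto simp: algebra_simps)
  then show ?thesis
    by (simp add: span_breakdown_eq span_singleton image_iff eq_commute[of "x - _"])
qed

lemma no_real_eigenvalue_independent:
  fixes B :: "'a::real_vector \<Rightarrow> 'a"
  assumes "no_real_eigenvalue B" "u \<noteq> 0" "a *\<^sub>R u + b *\<^sub>R B u = 0"
  shows "a = 0 \<and> b = 0"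
proof -
  have "b = 0"
  proof (rule ccontr)
    assume "b \<noteq> 0"
    have "B u = (1 / b) *\<^sub>R (b *\<^sub>R B u)"
      using \<open>b \<noteq> 0\<close> by simp
    also have "b *\<^sub>R B u = - (a *\<^sub>R u)"
      using assms(3) by (simp add: add_eq_0_iff)
    finally have "B u = (- a / b) *\<^sub>R u"
      by simp
    with assms(1,2) show False
      unfolding no_real_eigenvalue_def by blast
  qed
  with assms(2,3) show ?thesis
    by simp
qed

lemma surj_plus_no_real_eigenvalue:
  fixes B :: "'a::euclidean_space \<Rightarrow> 'a"
  assumes lin: "linear B" and ne: "no_real_eigenvalue B"
  shows "\<exists>v. v + B v = u"
proof -
  have l: "linear (\<lambda>v. v + B v)"
    by (intro linear_compose_add linear_id[unfolded id_def] lin)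
  have "inj (\<lambda>v. v + B v)"
    unfolding linear_injective_0[OF l]
    using ne unfolding no_real_eigenvalue_def by (metis add_eq_0_iff scaleR_minus1_left)
  then show ?thesis
    using linear_inj_imp_surj[OF l] by (metis surjD)
qed

lemma quadratic_relation_on_plane:
  assumes "linear B" "B (B u) = x *\<^sub>R u + y *\<^sub>R B u"
  shows "B (B (a *\<^sub>R u + b *\<^sub>R B u)) = x *\<^sub>R (a *\<^sub>R u + b *\<^sub>R B u) + y *\<^sub>R B (a *\<^sub>R u + b *\<^sub>R B u)"
proof -
  have "B (B (B u)) = x *\<^sub>R B u + y *\<^sub>R B (B u)"
    using assms by (simp add: linear_add linear_scale)
  then show ?thesis
    using assms by (simp add: linear_add linear_scale algebra_simps)
qed

lemma quadratic_relation_unique: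
  assumes "no_real_eigenvalue B" "u \<noteq> 0"
    and "B (B u) = x *\<^sub>R u + y *\<^sub>R B u" "B (B u) = x' *\<^sub>R u + y' *\<^sub>R B u"
  shows "x = x' \<and> y = y'"
  using no_real_eigenvalue_independent[OF assms(1,2), of "x - x'" "y - y'"] assms(3,4)
  by (simp add: algebra_simps)

lemma invariant_on_planes_relations_agree:
  assumes lin: "linear B" and ne: "no_real_eigenvalue B" and inv: "invariant_on_planes B"
    and u: "u \<noteq> 0" "B (B u) = x *\<^sub>R u + y *\<^sub>R B u"
    and w: "w \<noteq> 0" "B (B w) = x' *\<^sub>R w + y' *\<^sub>R B w"
  shows "x = x' \<and> y = y'"
proof (cases "u + w = 0")
  case True
  then have "w = - u"
    by (simp add: add_eq_0_iff)
  then have "B (B w) = x *\<^sub>R w + y *\<^sub>R B w"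
    using u(2) lin by (simp add: linear_neg)
  then show ?thesis
    using quadratic_relation_unique[OF ne w] by blast
next
  case False
  then obtain x'' y'' where uw: "B (B (u + w)) = x'' *\<^sub>R (u + w) + y'' *\<^sub>R B (u + w)"
    using inv unfolding invariant_on_planes_def span_pair_iff by blast
  define z where "z = (x'' - x) *\<^sub>R u + (y'' - y) *\<^sub>R B u"
  have z': "z = (x' - x'') *\<^sub>R w + (y' - y'') *\<^sub>R B w"
    using u(2) w(2) uw lin unfolding z_def by (simp add: linear_add algebra_simps)
  show ?thesis
  proof (cases "z = 0")
    case True
    then show ?thesis
      using no_real_eigenvalue_independent[OF ne u(1), of "x'' - x" "y'' - y"]
        no_real_eigenvalue_independent[OF ne w(1), of "x' - x''" "y' - y''"] z' unfolding z_def by simp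
  next
    case False
    have "B (B z) = x *\<^sub>R z + y *\<^sub>R B z"
      unfolding z_def by (rule quadratic_relation_on_plane[OF lin u(2)])
    moreover have "B (B z) = x' *\<^sub>R z + y' *\<^sub>R B z"
      unfolding z' by (rule quadratic_relation_on_plane[OF lin w(2)])
    ultimately show ?thesis
      using quadratic_relation_unique[OF ne False] by blast
  qed
qed

lemma invariant_on_planes_quadratic_relation:
  fixes B :: "'a::euclidean_space \<Rightarrow> 'a"
  assumes lin: "linear B" and ne: "no_real_eigenvalue B" and inv: "invariant_on_planes B"
  shows "\<exists>x y. \<forall>u. B (B u) = x *\<^sub>R u + y *\<^sub>R B u"
proof -
  have rel: "\<exists>x y. B (B u) = x *\<^sub>R u + y *\<^sub>R B u" if "u \<noteq> 0" for u
    using inv that unfolding invariant_on_planes_def span_pair_iff by blast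
  obtain u0 :: 'a where u0: "u0 \<noteq> 0"
    using nonzero_Basis SOME_Basis by blast
  then obtain x y where xy: "B (B u0) = x *\<^sub>R u0 + y *\<^sub>R B u0"
    using rel by blast
  have "B (B u) = x *\<^sub>R u + y *\<^sub>R B u" for u
  proof (cases "u = 0")
    case True
    then show ?thesis
      using lin by (simp add: linear_0)
  next
    case False
    then obtain x' y' where "B (B u) = x' *\<^sub>R u + y' *\<^sub>R B u"
      using rel by blast
    moreover from this have "x' = x \<and> y' = y"
      using invariant_on_planes_relations_agree[OF lin ne inv False _ u0 xy] by blast
    ultimately show ?thesis
      by simp
  qed
  then show ?thesis
    by blast
qed

lemma quadratic_relation_negative_discriminant:
  fixes B :: "'a::euclidean_space \<Rightarrow> 'a"
  assumes lin: "linear B" and ne: "no_real_eigenvalue B" and rel: "\<And>u. B (B u) = x *\<^sub>R u + y *\<^sub>R B u"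
  shows "y\<^sup>2 + 4 * x < 0"
proof (rule ccontr)
  assume "\<not> ?thesis"
  then have D: "y\<^sup>2 + 4 * x \<ge> 0"
    by simp
  define r1 r2 where "r1 = (y + sqrt (y\<^sup>2 + 4 * x)) / 2" and "r2 = (y - sqrt (y\<^sup>2 + 4 * x)) / 2"
  have roots: "y = r1 + r2" "x = - (r1 * r2)"
    unfolding r1_def r2_def using D by (simp_all add: field_simps power2_eq_square)
  obtain u0 :: 'a where u0: "u0 \<noteq> 0"
    using nonzero_Basis SOME_Basis by blast
  define w where "w = B u0 - r2 *\<^sub>R u0"
  have "w \<noteq> 0"
    using ne u0 unfolding no_real_eigenvalue_def w_def by simp
  moreover have "B w = r1 *\<^sub>R w"
    using lin unfolding w_def
    by (simp add: linear_diff linear_scale rel roots algebra_simps)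
  ultimately show False
    using ne unfolding no_real_eigenvalue_def by blast
qed

section \<open>Complex structures and their Hopf fibrations\<close>

locale complex_structure =
  fixes K :: "'v::euclidean_space \<Rightarrow> 'v"
  assumes linear: "linear K" and square: "\<And>x. K (K x) = - x"

lemma quadratic_relation_complex_structure:
  fixes B :: "'a::euclidean_space \<Rightarrow> 'a"
  assumes lin: "linear B" and ne: "no_real_eigenvalue B" and rel: "\<And>u. B (B u) = x *\<^sub>R u + y *\<^sub>R B u"
  shows "\<exists>a b J. b > 0 \<and> complex_structure J \<and> (\<forall>u. B u = a *\<^sub>R u + b *\<^sub>R J u)"
proof -
  define a b where "a = y / 2" and "b = sqrt (- x - a\<^sup>2)"
  have "- x - a\<^sup>2 > 0"
    using quadratic_relation_negative_discriminant[OF lin ne rel] unfolding a_def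
    by (simp add: power_divide)
  then have b: "b > 0" "b\<^sup>2 = - x - a\<^sup>2"
    unfolding b_def by simp_all
  define J where "J u = (1 / b) *\<^sub>R (B u - a *\<^sub>R u)" for u
  have "linear J"
    unfolding J_def by (intro linear_compose_scale_right linear_compose_sub lin linear_scale_self)
  moreover have "J (J u) = - u" for u
  proof -
    have "J (J u) = (1 / b\<^sup>2) *\<^sub>R (B (B u) - (2 * a) *\<^sub>R B u + a\<^sup>2 *\<^sub>R u)"
      unfolding J_def using lin
      by (simp add: linear_diff linear_scale algebra_simps power2_eq_square) (simp flip: scaleR_add_left)
    also have "\<dots> = (1 / b\<^sup>2) *\<^sub>R ((x + a\<^sup>2) *\<^sub>R u)"
      unfolding rel a_def by (simp add: algebra_simps)
    also have "x + a\<^sup>2 = - b\<^sup>2"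
      using b(2) by simp
    finally show ?thesis
      using b(1) by simp
  qed
  moreover have "B u = a *\<^sub>R u + b *\<^sub>R J u" for u
    unfolding J_def using b by simp
  ultimately show ?thesis
    using b by (blast intro: complex_structure.intro)
qed

definition hopf_circle :: "('v::real_inner \<Rightarrow> 'v) \<Rightarrow> 'v \<Rightarrow> ('v \<times> 'v) set" where
  "hopf_circle K X = ogc_of_plane X (K X)"

definition hopf_fibration :: "('v::real_inner \<Rightarrow> 'v) \<Rightarrow> ('v \<times> 'v) set set" where
  "hopf_fibration K = hopf_circle K ` sphere 0 1"

context complex_structure
begin

lemma no_real_eigenvalue: "no_real_eigenvalue K"
  unfolding no_real_eigenvalue_def
proof (intro allI impI)
  fix c and u :: 'v
  assume "u \<noteq> 0"
  show "K u \<noteq> c *\<^sub>R u"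
  proof
    assume "K u = c *\<^sub>R u"
    then have "(c * c + 1) *\<^sub>R u = 0"
      using square[of u] linear by (simp add: linear_scale algebra_simps)
    moreover have "c * c + 1 \<noteq> 0"
      using zero_le_square[of c] by linarith
    ultimately show False
      using \<open>u \<noteq> 0\<close> by simp
  qed
qed

lemma not_parallel: "u \<noteq> 0 \<Longrightarrow> K u \<noteq> c *\<^sub>R u"
  using no_real_eigenvalue unfolding no_real_eigenvalue_def by blast

lemma hopf_circle_span:
  assumes X: "X \<noteq> 0" and Y: "\<alpha> *\<^sub>R X + \<beta> *\<^sub>R K X \<noteq> 0"
  shows "hopf_circle K (\<alpha> *\<^sub>R X + \<beta> *\<^sub>R K X) = hopf_circle K X"
proof -
  have "\<alpha> \<noteq> 0 \<or> \<beta> \<noteq> 0"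
    using Y by auto
  then have "\<alpha> * \<alpha> - \<beta> * (- \<beta>) > 0"
    by (simp add: sum_squares_gt_zero_iff)
  moreover have "K (\<alpha> *\<^sub>R X + \<beta> *\<^sub>R K X) = (- \<beta>) *\<^sub>R X + \<alpha> *\<^sub>R K X"
    using linear by (simp add: linear_add linear_scale square)
  ultimately show ?thesis
    unfolding hopf_circle_def by (simp only: ogc_of_plane_change_basis[OF X not_parallel[OF X]])
qed

lemma hopf_circle_on_sphere:
  assumes "X \<noteq> 0" "q \<in> fst ` hopf_circle K X"
  shows "norm q = 1"
  using ogc_norm[OF ogc_of_plane_frame(1-3)[OF assms(1) not_parallel[OF assms(1)]]] assms(2)
  unfolding hopf_circle_def ogc_of_plane_eq by blast

lemma hopf_circle_through:
  assumes X: "X \<noteq> 0" and q: "q \<in> fst ` hopf_circle K X"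
  shows "hopf_circle K q = hopf_circle K X"
proof -
  obtain \<alpha> \<beta> where "q = \<alpha> *\<^sub>R X + \<beta> *\<^sub>R K X"
    using ogc_of_plane_point_in_span q unfolding hopf_circle_def by blast
  moreover have "q \<noteq> 0"
    using hopf_circle_on_sphere[OF X q] by auto
  ultimately show ?thesis
    using hopf_circle_span[OF X] by simp
qed

lemma hopf_circle_base: "(sgn X, gram_schmidt_dir X (K X)) \<in> hopf_circle K X"
  unfolding hopf_circle_def ogc_of_plane_eq by (rule ogc_base)

lemma hopf_circle_sgn:
  assumes "X \<noteq> 0"
  shows "hopf_circle K (sgn X) = hopf_circle K X"
  using assms hopf_circle_span[OF assms, of "inverse (norm X)" 0] by (simp add: sgn_div_norm divide_inverse_commute)

lemma hopf_circle_in_fibration: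
  assumes "X \<noteq> 0"
  shows "hopf_circle K X \<in> hopf_fibration K"
  unfolding hopf_fibration_def using assms hopf_circle_sgn[OF assms] by (intro image_eqI[of _ _ "sgn X"]) (simp_all add: norm_sgn)

lemma hopf_fibrationE:
  assumes "C \<in> hopf_fibration K"
  obtains p where "p \<noteq> 0" "C = hopf_circle K p"
proof -
  obtain p where "p \<in> sphere 0 1" "C = hopf_circle K p"
    using assms unfolding hopf_fibration_def by blast
  moreover from this(1) have "p \<noteq> 0"
    by auto
  ultimately show thesis
    using that by blast
qed

lemma hopf_circle_tangent:
  assumes X: "X \<noteq> 0" and qw: "(q, w) \<in> hopf_circle K X"
  shows "w = gram_schmidt_dir q (K q)"
proof -
  have "q \<in> fst ` hopf_circle K X"
    using qw by (rule rev_image_eqI) simp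
  then have "norm q = 1" and "hopf_circle K q = hopf_circle K X"
    by (rule hopf_circle_on_sphere[OF X], rule hopf_circle_through[OF X])
  then have "(q, gram_schmidt_dir q (K q)) \<in> hopf_circle K X"
    using hopf_circle_base[of q] by (simp add: sgn_div_norm)
  then show ?thesis
    using ogc_tangent_unique[OF ogc_of_plane_frame(1-3)[OF X not_parallel[OF X]]] qw
    unfolding hopf_circle_def ogc_of_plane_eq by blast
qed

lemma continuous_on_hopf_tangent: "continuous_on (- {0}) (\<lambda>p. gram_schmidt_dir p (K p))"
  unfolding continuous_on_def
proof
  fix p :: 'v assume "p \<in> - {0}"
  then have "p \<noteq> 0"
    by simp
  moreover have "(K \<longlongrightarrow> K p) (at p within - {0})"
    using linear_continuous_within[OF linear[unfolded linear_conv_bounded_linear]] by (simp add: continuous_within)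
  ultimately show "((\<lambda>p. gram_schmidt_dir p (K p)) \<longlongrightarrow> gram_schmidt_dir p (K p)) (at p within - {0})"
    by (intro tendsto_gram_schmidt_dir tendsto_ident_at not_parallel)
qed

lemma great_circle_fibration_hopf: "great_circle_fibration (hopf_fibration K)"
  unfolding great_circle_fibration_def
proof (intro conjI ballI)
  fix C assume "C \<in> hopf_fibration K"
  then obtain p where "p \<noteq> 0" "C = hopf_circle K p"
    by (rule hopf_fibrationE)
  then show "oriented_great_circle C"
    unfolding hopf_circle_def using oriented_great_circle_ogc_of_plane not_parallel by blast
next
  fix q :: 'v assume q: "q \<in> sphere 0 1"
  show "\<exists>!C. C \<in> hopf_fibration K \<and> q \<in> fst ` C"
  proof (rule ex1I[of _ "hopf_circle K q"])
    have "q \<in> fst ` hopf_circle K q"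
      using q hopf_circle_base[of q] by (force simp: sgn_div_norm)
    moreover have "q \<noteq> 0"
      using q by auto
    ultimately show "hopf_circle K q \<in> hopf_fibration K \<and> q \<in> fst ` hopf_circle K q"
      using hopf_circle_in_fibration by blast
  next
    fix C assume C: "C \<in> hopf_fibration K \<and> q \<in> fst ` C"
    then obtain p where "p \<noteq> 0" "C = hopf_circle K p"
      by (auto elim: hopf_fibrationE)
    then show "C = hopf_circle K q"
      using C hopf_circle_through[of p q] by simp
  qed
next
  have "continuous_on (sphere 0 1) (\<lambda>p. gram_schmidt_dir p (K p))"
    by (rule continuous_on_subset[OF continuous_on_hopf_tangent]) auto
  moreover have "\<forall>C\<in>hopf_fibration K. \<forall>(p, w)\<in>C. gram_schmidt_dir p (K p) = w"
  proof (intro ballI, clarify)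
    fix C q w assume "C \<in> hopf_fibration K" "(q, w) \<in> C"
    then show "gram_schmidt_dir q (K q) = w"
      by (auto elim: hopf_fibrationE dest: hopf_circle_tangent)
  qed
  ultimately show "\<exists>v. continuous_on (sphere 0 1) v \<and> (\<forall>C\<in>hopf_fibration K. \<forall>(p, w)\<in>C. v p = w)"
    by (intro exI[of _ "\<lambda>p. gram_schmidt_dir p (K p)"] conjI)
qed

end

definition plane_complex_structure :: "real \<Rightarrow> real \<Rightarrow> real \<times> real \<Rightarrow> real \<times> real" where
  "plane_complex_structure a b = (\<lambda>(s, h). ((a * s + h) / b, (- (a\<^sup>2 + b\<^sup>2) * s - a * h) / b))"

lemma complex_structure_plane:
  assumes "b \<noteq> 0"
  shows "complex_structure (plane_complex_structure a b)"
proof (rule complex_structure.intro)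
  show "linear (plane_complex_structure a b)"
    using assms by (auto intro!: linearI simp: plane_complex_structure_def field_simps)
  show "plane_complex_structure a b (plane_complex_structure a b p) = - p" for p
    using assms by (cases p) (simp add: plane_complex_structure_def field_simps power2_eq_square)
qed

lemma complex_structure_map_prod:
  assumes "complex_structure J" "complex_structure M"
  shows "complex_structure (map_prod J M)"
proof (rule complex_structure.intro)
  show "linear (map_prod J M)"
    using assms[unfolded complex_structure_def]
    by (intro linearI) (auto simp: linear_add linear_scale)
  show "map_prod J M (map_prod J M p) = - p" for p
    using assms[unfolded complex_structure_def] by (cases p) simp
qed

lemma complex_structure_plane_span:
  fixes M :: "real \<times> real \<Rightarrow> real \<times> real"
  assumes "complex_structure M" "r \<noteq> 0"
  shows "\<exists>\<alpha> \<beta>. \<alpha> *\<^sub>R r + \<beta> *\<^sub>R M r = s"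
proof -
  interpret complex_structure M
    by fact
  have "r \<notin> span {M r}"
  proof
    assume "r \<in> span {M r}"
    then obtain k where "1 *\<^sub>R r + (- k) *\<^sub>R M r = 0"
      by (auto simp: span_singleton)
    from no_real_eigenvalue_independent[OF no_real_eigenvalue \<open>r \<noteq> 0\<close> this] show False
      by simp
  qed
  moreover have "M r \<noteq> 0"
    using not_parallel[OF \<open>r \<noteq> 0\<close>, of 0] by simp
  ultimately have "independent {r, M r}"
    using independent_insertI[of r "{M r}"] by simp
  moreover have "r \<noteq> M r"
    using \<open>r \<notin> span {M r}\<close> span_base[of r "{r}"] by auto
  ultimately have "span {r, M r} = UNIV"
    using dim_span_eq_card_independent[of "{r, M r}"] dim_eq_full[of "{r, M r}"] by simp
  then have "s \<in> span {r, M r}"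
    by simp
  then show ?thesis
    by (auto simp: span_pair_iff)
qed

lemma hopf_circle_map_prod_affine_point:
  fixes J :: "'a::euclidean_space \<Rightarrow> 'a" and M :: "real \<times> real \<Rightarrow> real \<times> real"
  assumes J: "complex_structure J" and M: "complex_structure M" and q: "q \<noteq> 0" "snd q \<noteq> 0"
  shows "\<exists>w. hopf_circle (map_prod J M) q = hopf_circle (map_prod J M) (w, 0, 1)"
proof -
  interpret K: complex_structure "map_prod J M"
    by (rule complex_structure_map_prod[OF J M])
  obtain \<alpha> \<beta> where \<alpha>\<beta>: "\<alpha> *\<^sub>R snd q + \<beta> *\<^sub>R M (snd q) = (0, 1)"
    using complex_structure_plane_span[OF M q(2)] by blast
  define U where "U = \<alpha> *\<^sub>R q + \<beta> *\<^sub>R map_prod J M q"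
  have "snd U = (0, 1)"
    using \<alpha>\<beta> by (simp add: U_def map_prod_def split_beta)
  then have "U = (fst U, 0, 1)" and "U \<noteq> 0"
    by (auto simp: prod_eq_iff)
  moreover have "hopf_circle (map_prod J M) U = hopf_circle (map_prod J M) q"
    unfolding U_def by (rule K.hopf_circle_span[OF q(1) \<open>U \<noteq> 0\<close>[unfolded U_def]])
  ultimately show ?thesis
    by metis
qed

section \<open>The line fibration generated by a linear map\<close>

lemma line_great_circle_eq_hopf_circle:
  fixes B J :: "'a::euclidean_space \<Rightarrow> 'a"
  assumes J: "complex_structure J" and b: "b > 0" and B: "\<And>u. B u = a *\<^sub>R u + b *\<^sub>R J u"
  shows "line_great_circle B w = hopf_circle (map_prod J (plane_complex_structure a b)) (w, 0, 1)"
proof -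
  define K where "K = map_prod J (plane_complex_structure a b)"
  interpret K: complex_structure K
    unfolding K_def using J b by (intro complex_structure_map_prod complex_structure_plane) simp_all
  have U: "(w, 0::real, 1::real) \<noteq> 0"
    by (simp add: zero_prod_def)
  have "(B w, 1, 0) = a *\<^sub>R (w, 0::real, 1::real) + b *\<^sub>R K (w, 0, 1)"
    using b by (simp add: B K_def plane_complex_structure_def)
  then have "line_great_circle B w
      = ogc_of_plane (1 *\<^sub>R (w, 0, 1) + 0 *\<^sub>R K (w, 0, 1)) (a *\<^sub>R (w, 0, 1) + b *\<^sub>R K (w, 0, 1))"
    by (simp add: line_great_circle_def)
  also have "\<dots> = hopf_circle K (w, 0, 1)"
    unfolding hopf_circle_def using b by (intro ogc_of_plane_change_basis U K.not_parallel) simp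
  finally show ?thesis
    unfolding K_def .
qed

lemma corresponds_to_great_circle_fibration_if_complex_structure:
  fixes B J :: "'a::euclidean_space \<Rightarrow> 'a"
  assumes J: "complex_structure J" and b: "b > 0" and B: "\<And>u. B u = a *\<^sub>R u + b *\<^sub>R J u"
  shows "corresponds_to_great_circle_fibration B"
proof -
  define M where "M = plane_complex_structure a b"
  define K where "K = map_prod J M"
  have M: "complex_structure M"
    unfolding M_def using b by (intro complex_structure_plane) simp
  interpret K: complex_structure K
    unfolding K_def by (rule complex_structure_map_prod[OF J M])
  have line: "line_great_circle B w = hopf_circle K (w, 0, 1)" for w
    unfolding K_def M_def by (rule line_great_circle_eq_hopf_circle[OF J b B])
  have "{C \<in> hopf_fibration K. \<exists>pw\<in>C. 0 < snd (snd (fst pw))} = range (line_great_circle B)"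
  proof (intro equalityI subsetI)
    fix C assume "C \<in> range (line_great_circle B)"
    then obtain w where C: "C = hopf_circle K (w, 0, 1)"
      using line by auto
    have U: "(w, 0::real, 1::real) \<noteq> 0"
      by (simp add: zero_prod_def)
    then have "0 < snd (snd (sgn (w, 0::real, 1::real)))"
      by (simp add: sgn_div_norm)
    then show "C \<in> {C \<in> hopf_fibration K. \<exists>pw\<in>C. 0 < snd (snd (fst pw))}"
      using K.hopf_circle_in_fibration[OF U] K.hopf_circle_base unfolding C by force
  next
    fix C assume "C \<in> {C \<in> hopf_fibration K. \<exists>pw\<in>C. 0 < snd (snd (fst pw))}"
    then obtain p q w where p0: "p \<noteq> 0" and C: "C = hopf_circle K p"
      and qw: "(q, w) \<in> C" and h: "0 < snd (snd q)"
      by (auto elim: K.hopf_fibrationE)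
    have q: "q \<in> fst ` hopf_circle K p"
      using qw C by force
    have "q \<noteq> 0" "snd q \<noteq> 0"
      using K.hopf_circle_on_sphere[OF p0 q] h by auto
    then obtain w where "hopf_circle K q = hopf_circle K (w, 0, 1)"
      using hopf_circle_map_prod_affine_point[OF J M] unfolding K_def by blast
    then show "C \<in> range (line_great_circle B)"
      using K.hopf_circle_through[OF p0 q] C line by auto
  qed
  then show ?thesis
    unfolding corresponds_to_great_circle_fibration_def using K.great_circle_fibration_hopf by blast
qed

lemma line_great_circle_mem:
  fixes B :: "'a::euclidean_space \<Rightarrow> 'a" and y :: 'a and s r t :: real
  assumes "s > 0" "r > 0"
  defines "X \<equiv> s *\<^sub>R ((y, 0, 1) + t *\<^sub>R (B y, 1, 0))"
  shows "(sgn X, gram_schmidt_dir X (r *\<^sub>R (B y, 1, 0))) \<in> line_great_circle B y"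
proof -
  define U Q where "U = (y, 0::real, 1::real)" and "Q = (B y, 1::real, 0::real)"
  have "U \<noteq> 0" "\<And>c. Q \<noteq> c *\<^sub>R U"
    unfolding U_def Q_def by (simp_all add: zero_prod_def)
  then have "ogc_of_plane (s *\<^sub>R U + (s * t) *\<^sub>R Q) (0 *\<^sub>R U + r *\<^sub>R Q) = ogc_of_plane U Q"
    using assms by (intro ogc_of_plane_change_basis) simp_all
  then have "ogc_of_plane X (r *\<^sub>R Q) = line_great_circle B y"
    unfolding X_def line_great_circle_def U_def Q_def by (simp add: scaleR_add_right)
  then show ?thesis
    using ogc_base unfolding Q_def ogc_of_plane_eq by metis
qed

lemma line_fibration_equator_tangent:
  fixes B :: "'a::euclidean_space \<Rightarrow> 'a" and T :: "'a \<times> real \<times> real \<Rightarrow> 'a \<times> real \<times> real"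
  assumes lin: "linear B" and cont: "continuous_on (sphere 0 1) T"
    and tangent: "\<And>y p w. (p, w) \<in> line_great_circle B y \<Longrightarrow> T p = w"
    and u: "v + t *\<^sub>R B v \<noteq> 0" and Bv: "\<And>c. B v \<noteq> c *\<^sub>R (v + t *\<^sub>R B v)"
  shows "T (sgn (v + t *\<^sub>R B v, 0, 0)) = gram_schmidt_dir (v + t *\<^sub>R B v, 0, 0) (B v, 0, 0)"
proof -
  define u where "u = v + t *\<^sub>R B v"
  define X Q where "X h = (u, h * t, h)" and "Q h = (B v, h, 0::real)" for h :: real
  have on_line: "T (sgn (X h)) = gram_schmidt_dir (X h) (Q h)" if "h > 0" for h
  proof -
    have "X h = h *\<^sub>R (((1 / h) *\<^sub>R v, 0, 1) + t *\<^sub>R (B ((1 / h) *\<^sub>R v), 1, 0))"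
      "Q h = h *\<^sub>R (B ((1 / h) *\<^sub>R v), 1, 0)"
      using that lin by (simp_all add: X_def Q_def u_def linear_scale algebra_simps)
    then show ?thesis
      using tangent line_great_circle_mem that by metis
  qed
  have eq: "\<forall>\<^sub>F h in at_right 0. gram_schmidt_dir (X h) (Q h) = T (sgn (X h))"
    using eventually_at_right_less[of "0::real"] by (rule eventually_mono) (simp add: on_line)
  have X: "(X \<longlongrightarrow> (u, 0, 0)) (at_right 0)" and Q: "(Q \<longlongrightarrow> (B v, 0, 0)) (at_right 0)"
    unfolding X_def Q_def by (auto intro!: tendsto_eq_intros)
  have u0: "(u, 0::real, 0::real) \<noteq> 0"
    using u by (simp add: u_def zero_prod_def)
  have "((\<lambda>h. T (sgn (X h))) \<longlongrightarrow> T (sgn (u, 0, 0))) (at_right 0)"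
  proof (rule continuous_on_tendsto_compose[OF cont])
    show "((\<lambda>h. sgn (X h)) \<longlongrightarrow> sgn (u, 0, 0)) (at_right 0)"
      by (rule tendsto_sgn[OF X u0])
    show "sgn (u, 0::real, 0::real) \<in> sphere 0 1"
      using u0 by (simp add: norm_sgn)
    have "X h \<noteq> 0" for h
      using u0 by (simp add: X_def zero_prod_def)
    then show "\<forall>\<^sub>F h in at_right 0. sgn (X h) \<in> sphere 0 1"
      by (simp add: norm_sgn always_eventually)
  qed
  moreover have "((\<lambda>h. T (sgn (X h))) \<longlongrightarrow> gram_schmidt_dir (u, 0, 0) (B v, 0, 0)) (at_right 0)"
    using Bv u0 by (intro Lim_transform_eventually[OF tendsto_gram_schmidt_dir[OF X Q] eq])
      (simp_all add: u_def)
  ultimately show ?thesis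
    unfolding u_def by (rule tendsto_unique[OF trivial_limit_at_right_real])
qed

lemma corresponds_to_great_circle_fibration_tangent_field:
  assumes "corresponds_to_great_circle_fibration B"
  obtains T where "continuous_on (sphere 0 1) T" "\<And>y p w. (p, w) \<in> line_great_circle B y \<Longrightarrow> T p = w"
proof -
  obtain F where fib: "great_circle_fibration F"
    and F: "{C \<in> F. \<exists>pw\<in>C. 0 < snd (snd (fst pw))} = range (line_great_circle B)"
    using assms unfolding corresponds_to_great_circle_fibration_def by blast
  obtain T where cont: "continuous_on (sphere 0 1) T" and T: "\<forall>C\<in>F. \<forall>(p, w)\<in>C. T p = w"
    using fib unfolding great_circle_fibration_def by blast
  have lines: "line_great_circle B y \<in> F" for y
    using F by blast
  show ?thesis
  proof (rule that[OF cont])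
    fix y p w assume "(p, w) \<in> line_great_circle B y"
    then show "T p = w"
      using T lines[of y] by fastforce
  qed
qed

lemma square_in_span_of_resolvent:
  assumes lin: "linear B" and v: "v + B v = u"
    and Bv: "B v = \<rho> *\<^sub>R B u + \<mu> *\<^sub>R u" and \<rho>: "\<rho> \<noteq> 0"
  shows "B (B u) \<in> span {u, B u}"
proof -
  have "\<rho> *\<^sub>R B (B u) + \<mu> *\<^sub>R B u = B (B v)"
    using lin by (simp add: Bv linear_add linear_scale)
  also have "\<dots> = B u - B v"
    using lin by (simp add: linear_add flip: v)
  finally have scaled: "\<rho> *\<^sub>R B (B u) = (1 - \<rho> - \<mu>) *\<^sub>R B u - \<mu> *\<^sub>R u"
    by (simp add: Bv algebra_simps)
  have "B (B u) = (1 / \<rho>) *\<^sub>R (\<rho> *\<^sub>R B (B u))"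
    using \<rho> by simp
  also have "\<dots> = (- \<mu> / \<rho>) *\<^sub>R u + ((1 - \<rho> - \<mu>) / \<rho>) *\<^sub>R B u"
    unfolding scaled by (simp add: scaleR_diff_right add.commute)
  finally show ?thesis
    unfolding span_pair_iff by blast
qed

lemma invariant_on_planes_if_corresponds:
  fixes B :: "'a::euclidean_space \<Rightarrow> 'a"
  assumes lin: "linear B" and ne: "no_real_eigenvalue B"
    and corr: "corresponds_to_great_circle_fibration B"
  shows "invariant_on_planes B"
  unfolding invariant_on_planes_def
proof (intro allI impI)
  fix u :: 'a assume u: "u \<noteq> 0"
  obtain T where cont: "continuous_on (sphere 0 1) T"
    and tangent: "\<And>y p w. (p, w) \<in> line_great_circle B y \<Longrightarrow> T p = w"
    using corresponds_to_great_circle_fibration_tangent_field[OF corr] by blast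
  obtain v where v: "v + B v = u"
    using surj_plus_no_real_eigenvalue[OF lin ne] by blast
  have "B v \<noteq> c *\<^sub>R (v + 1 *\<^sub>R B v)" for c
  proof
    assume "B v = c *\<^sub>R (v + 1 *\<^sub>R B v)"
    then have "(- c) *\<^sub>R v + (1 - c) *\<^sub>R B v = 0"
      by (simp add: algebra_simps)
    moreover have "v \<noteq> 0"
      using u v lin by (auto simp: linear_0)
    ultimately show False
      using no_real_eigenvalue_independent[OF ne] by fastforce
  qed
  then have "T (sgn (u, 0, 0)) = gram_schmidt_dir (u, 0, 0) (B v, 0, 0)"
    using line_fibration_equator_tangent[OF lin cont tangent, where v = v and t = 1] u v by simp
  moreover have "T (sgn (u, 0, 0)) = gram_schmidt_dir (u, 0, 0) (B u, 0, 0)"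
    using line_fibration_equator_tangent[OF lin cont tangent, where v = u and t = 0] u ne
    unfolding no_real_eigenvalue_def by simp
  ultimately obtain \<rho> \<mu> where "\<rho> \<noteq> 0" "(B v, 0::real, 0::real) = \<rho> *\<^sub>R (B u, 0, 0) + \<mu> *\<^sub>R (u, 0, 0)"
    using gram_schmidt_dir_eq_imp_combination[of "(u, 0::real, 0::real)" "(B v, 0, 0)" "(B u, 0, 0)"]
      u ne unfolding no_real_eigenvalue_def by force
  then show "B (B u) \<in> span {u, B u}"
    using square_in_span_of_resolvent[OF lin v] by simp
qed

theorem proposition6p3:
  fixes B :: "'a::euclidean_space \<Rightarrow> 'a"
  assumes "linear B" and "even DIM('a)" and "no_real_eigenvalue B"
  shows "corresponds_to_great_circle_fibration B \<longleftrightarrow> invariant_on_planes B"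
proof
  assume "corresponds_to_great_circle_fibration B"
  then show "invariant_on_planes B"
    using invariant_on_planes_if_corresponds assms(1,3) by blast
next
  assume "invariant_on_planes B"
  then obtain x y where "\<And>u. B (B u) = x *\<^sub>R u + y *\<^sub>R B u"
    using invariant_on_planes_quadratic_relation assms(1,3) by blast
  then obtain a b J where "complex_structure J" "b > 0" "\<And>u. B u = a *\<^sub>R u + b *\<^sub>R J u"
    using quadratic_relation_complex_structure assms(1,3) by blast
  then show "corresponds_to_great_circle_fibration B"
    by (rule corresponds_to_great_circle_fibration_if_complex_structure)
qed

end
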